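(* Let $(V,B)$ be a real $4$-dimensional vector space with a symmetric bilinear form of signature $(3,1)$, and let $\Delta=\{\alpha,\beta,\gamma,\delta\}$ be a basis of $V$ with $B(\chi,\chi)=1$ and $B(\chi,\xi)=-1$ for all distinct $\chi,\xi\in\Delta$. Let $\Gamma$ be the group generated by the reflections $s_\chi(v)=v-2B(\chi,v)\chi$, $\chi\in\Delta$ (the universal Coxeter group of rank $4$). Let $\mathcal H$ be the affine hyperplane of $V$ containing $\alpha,\beta,\gamma,\delta$, and for $v\notin\mathcal H_0$ (the linear hyperplane parallel to $\mathcal H$) let $\widehat v$ be the intersection point of $\mathbb Rv$ with $\mathcal H$. Let $\mathbb B=\{v:B(v,v)<0\}\cap\mathcal H$ (a projective model of hyperbolic $3$-space, an open ellipsoidal ball) with boundary sphere $\widehat Q=\{v:B(v,v)=0\}\cap\mathcal H$, on which $\Gamma$ acts by $w\cdot x=\widehat{w(x)}$. For $\chi\in\Delta$ let $h_\chi$ be the circle in which $\widehat Q$ meets the face of the tetrahedron $\operatorname{conv}(\Delta)$ opposite to the vertex $\chi$, and let the Apollonian gasket be $\mathcal A=\bigcup_{w\in\Gamma}w\cdot(h_\alpha\cup h_\beta\cup h_\gamma\cup h_\delta)\subseteq\widehat Q$. Then the limit set $\Lambda(\Gamma)$ of $\Gamma$ (the set of accumulation points of $\Gamma\cdot x_0$ for any $x_0\in\mathbb B$) equals the closure of $\mathcal A$ in $\widehat Q$.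
   Context: The action $w\cdot x=\widehat{w(x)}$ is by isometries of the hyperbolic metric on $\mathbb B$ (pulled back from the hyperboloid $\{B(v,v)=-1\}$ component on the side of $\mathcal H$ via radial projection) and extends continuously to the boundary sphere $\widehat Q$; $\Gamma$ acts as a discrete group. The limit set does not depend on the choice of $x_0\in\mathbb B$. *)

theory Defs
  imports "HOL-Analysis.Analysis"
begin

definition signature_3_1 :: "('v::real_vector \<Rightarrow> 'v \<Rightarrow> real) \<Rightarrow> bool" where
  "signature_3_1 B \<longleftrightarrow>
     (\<exists>e :: nat \<Rightarrow> 'v. inj_on e {0..<4} \<and> independent (e ` {0..<4})
        \<and> span (e ` {0..<4}) = UNIV
        \<and> (\<forall>i<4. \<forall>j<4. i \<noteq> j \<longrightarrow> B (e i) (e j) = 0)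
        \<and> (\<forall>i<3. B (e i) (e i) = 1) \<and> B (e 3) (e 3) = -1)"

definition reflB :: "('v::real_vector \<Rightarrow> 'v \<Rightarrow> real) \<Rightarrow> 'v \<Rightarrow> 'v \<Rightarrow> 'v" where
  "reflB B c v = v - (2 * B c v) *\<^sub>R c"

text \<open>The group generated by the reflections s_chi, chi in Delta, as a set of maps V -> V.
  Since every generator is an involution, the monoid generated is the group generated.\<close>
inductive_set refl_group :: "('v::real_vector \<Rightarrow> 'v \<Rightarrow> real) \<Rightarrow> 'v set \<Rightarrow> ('v \<Rightarrow> 'v) set"
  for B \<Delta> where
  id_in: "id \<in> refl_group B \<Delta>"
| step: "c \<in> \<Delta> \<Longrightarrow> w \<in> refl_group B \<Delta> \<Longrightarrow> reflB B c \<circ> w \<in> refl_group B \<Delta>"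

definition hat :: "'v::real_vector set \<Rightarrow> 'v \<Rightarrow> 'v" where
  "hat H v = (THE p. p \<in> H \<and> (\<exists>t::real. p = t *\<^sub>R v))"

definition limit_set :: "('v \<Rightarrow> 'v) set \<Rightarrow> (('v \<Rightarrow> 'v) \<Rightarrow> 'v \<Rightarrow> 'v::topological_space) \<Rightarrow> 'v \<Rightarrow> 'v set" where
  "limit_set G act x0 = {x. x islimpt ((\<lambda>w. act w x0) ` G)}"

end

theory Submission
  imports Defs
begin

text \<open>In the coordinates dual to \<open>\<Delta>\<close> the form is \<open>2 \<Sum> x\<^sub>c\<^sup>2 - (\<Sum> x\<^sub>c)\<^sup>2\<close>, so it is positive
  definite on the linear hyperplane parallel to \<open>\<H>\<close>, and \<open>\<Gamma>\<close> preserves the lattice spanned by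
  \<open>\<Delta>\<close>, hence is discrete.

  The tangency point \<open>(a + b) / 2\<close> of two face circles is the fixed point of the parabolic
  element \<open>s\<^sub>a s\<^sub>b\<close>, hence lies in \<open>\<Lambda>(\<Gamma>)\<close>. The face circle through \<open>a, b, c\<close> is parametrised by
  \<open>m\<^sup>2 a + n\<^sup>2 b + (m + n)\<^sup>2 c\<close>, and a Euclid-type descent through \<open>s\<^sub>a, s\<^sub>b, s\<^sub>c\<close> moves every
  integral point \<open>(m, n)\<close> to a tangency point. Integral points are projectively dense in the circle
  and \<open>\<Lambda>(\<Gamma>)\<close> is closed and \<open>\<Gamma>\<close>-invariant, so the closure of the gasket lies in \<open>\<Lambda>(\<Gamma>)\<close>.

  Conversely, if \<open>g\<^sub>n \<cdot> x\<^sub>0 \<rightarrow> p\<close>, discreteness forces \<open>g\<^sub>n\<close> to diverge. Suitably rescaled, \<open>g\<^sub>n\<close>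
  and \<open>g\<^sub>n\<^sup>-\<^sup>1\<close> converge along a subsequence to maps \<open>M, M'\<close>, not both zero, with null images and
  \<open>B (M u) v = B u (M' v)\<close>. Hence \<open>g\<^sub>n \<cdot> y \<rightarrow> p\<close> for every \<open>y\<close> not orthogonal to a null vector
  \<open>b\<close> in the image of \<open>M'\<close>, and one of two tangency points is such a \<open>y\<close>.\<close>

text \<open>This holds even when the line through \<open>v\<close> misses \<open>S\<close> and \<open>hat S v\<close> is an unspecified
  value.\<close>

lemma hat_scaleR: assumes "k \<noteq> 0" shows "hat S (k *\<^sub>R v) = hat S v"
proof -
  have "(\<exists>t. p = t *\<^sub>R (k *\<^sub>R v)) \<longleftrightarrow> (\<exists>t. p = t *\<^sub>R v)" for p
  proof
    assume "\<exists>t. p = t *\<^sub>R (k *\<^sub>R v)"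
    then show "\<exists>t. p = t *\<^sub>R v"
      by (metis scaleR_scaleR)
  next
    assume "\<exists>t. p = t *\<^sub>R v"
    then obtain t where "p = t *\<^sub>R v" ..
    then have "p = (t / k) *\<^sub>R (k *\<^sub>R v)"
      using assms by simp
    then show "\<exists>t. p = t *\<^sub>R (k *\<^sub>R v)" ..
  qed
  then show ?thesis
    by (simp add: hat_def)
qed

lemma finite_family_convergent_subsequence:
  fixes f :: "'i \<Rightarrow> nat \<Rightarrow> 'a::heine_borel"
  assumes "finite I" and "\<And>i. i \<in> I \<Longrightarrow> bounded (range (f i))"
  obtains r where "strict_mono r" and "\<And>i. i \<in> I \<Longrightarrow> \<exists>l. (f i \<circ> r) \<longlonglongrightarrow> l"
  using assms
proof (induction I arbitrary: thesis rule: finite_induct)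
  case empty
  show ?case by (rule empty.prems(1)[of id]) (auto simp: strict_mono_def)
next
  case (insert i I)
  obtain r where r: "strict_mono r" and lim: "\<And>j. j \<in> I \<Longrightarrow> \<exists>l. (f j \<circ> r) \<longlonglongrightarrow> l"
    using insert.IH insert.prems(2) by blast
  have "bounded (range (f i \<circ> r))"
    using insert.prems(2)[of i] by (rule bounded_subset) auto
  then obtain l r' where r': "strict_mono r'" and "((f i \<circ> r) \<circ> r') \<longlonglongrightarrow> l"
    using bounded_imp_convergent_subsequence by blast
  show ?case
  proof (rule insert.prems(1))
    show "strict_mono (r \<circ> r')" using r r' by (rule strict_mono_o)
    fix j assume "j \<in> insert i I"
    then show "\<exists>l. (f j \<circ> (r \<circ> r')) \<longlonglongrightarrow> l"
      using lim LIMSEQ_subseq_LIMSEQ[OF _ r'] \<open>((f i \<circ> r) \<circ> r') \<longlonglongrightarrow> l\<close>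
      by (metis insertE o_assoc)
  qed
qed

lemma linear_sequence_convergent_subsequence:
  fixes f :: "nat \<Rightarrow> 'a::real_vector \<Rightarrow> 'b::euclidean_space"
  assumes "finite S" and "span S = UNIV" and "\<And>n. linear (f n)"
    and "\<And>s. s \<in> S \<Longrightarrow> bounded (range (\<lambda>n. f n s))"
  obtains r where "strict_mono r" and "\<And>v. \<exists>l. (\<lambda>n. f (r n) v) \<longlonglongrightarrow> l"
proof -
  obtain r where r: "strict_mono r" and lim: "\<And>s. s \<in> S \<Longrightarrow> \<exists>l. (\<lambda>n. f (r n) s) \<longlonglongrightarrow> l"
    using finite_family_convergent_subsequence[of S "\<lambda>s n. f n s"] assms(1,4)
    by (auto simp: o_def)
  then obtain l where l: "\<And>s. s \<in> S \<Longrightarrow> (\<lambda>n. f (r n) s) \<longlonglongrightarrow> l s" by metis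
  have "\<exists>l. (\<lambda>n. f (r n) v) \<longlonglongrightarrow> l" for v
  proof -
    obtain u where v: "v = (\<Sum>s\<in>S. u s *\<^sub>R s)"
      using span_finite[OF assms(1)] assms(2) by auto
    have "f (r n) v = (\<Sum>s\<in>S. u s *\<^sub>R f (r n) s)" for n
      unfolding v using assms(3) by (simp add: linear_sum linear_scale)
    moreover have "(\<lambda>n. \<Sum>s\<in>S. u s *\<^sub>R f (r n) s) \<longlonglongrightarrow> (\<Sum>s\<in>S. u s *\<^sub>R l s)"
      by (intro tendsto_sum tendsto_scaleR tendsto_const l)
    ultimately show ?thesis by auto
  qed
  with r show thesis by (rule that)
qed

lemma norm_le_sum_norm_add:
  fixes f :: "'i \<Rightarrow> 'a::real_normed_vector" and g :: "'i \<Rightarrow> 'b::real_normed_vector"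
  assumes "finite S" and "s \<in> S"
  shows "norm (f s) \<le> (\<Sum>t\<in>S. norm (f t) + norm (g t))"
    and "norm (g s) \<le> (\<Sum>t\<in>S. norm (f t) + norm (g t))"
proof -
  have "norm (f s) + norm (g s) \<le> (\<Sum>t\<in>S. norm (f t) + norm (g t))"
    using assms by (intro member_le_sum) simp_all
  then show "norm (f s) \<le> (\<Sum>t\<in>S. norm (f t) + norm (g t))"
    and "norm (g s) \<le> (\<Sum>t\<in>S. norm (f t) + norm (g t))"
    using norm_ge_zero[of "f s"] norm_ge_zero[of "g s"] by linarith+
qed

lemma normalized_linear_pair_limit:
  fixes f f' :: "nat \<Rightarrow> 'a::real_vector \<Rightarrow> 'b::euclidean_space"
  assumes "finite S" and "span S = UNIV" and linear: "\<And>n. linear (f n)" "\<And>n. linear (f' n)"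
    and N: "\<And>n. N n = (\<Sum>s\<in>S. norm (f n s) + norm (f' n s))"
    and N_top: "filterlim N at_top sequentially"
  obtains r M M' where "strict_mono r"
    and "\<And>v. (\<lambda>n. (1 / N (r n)) *\<^sub>R f (r n) v) \<longlonglongrightarrow> M v"
    and "\<And>v. (\<lambda>n. (1 / N (r n)) *\<^sub>R f' (r n) v) \<longlonglongrightarrow> M' v"
    and "\<exists>s\<in>S. M s \<noteq> 0 \<or> M' s \<noteq> 0"
proof -
  define F where "F n v = ((1 / N n) *\<^sub>R f n v, (1 / N n) *\<^sub>R f' n v)" for n v
  have N_ge: "norm (f n s) \<le> N n" "norm (f' n s) \<le> N n" if "s \<in> S" for n s
    unfolding N using norm_le_sum_norm_add[OF assms(1) that] by blast+
  have N_nonneg: "0 \<le> N n" for n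
    unfolding N by (intro sum_nonneg) auto
  have "linear (F n)" for n
    using linear[of n]
    by (intro linearI) (simp_all add: F_def linear_add linear_scale scaleR_add_right)
  moreover have "bounded (range (\<lambda>n. F n s))" if "s \<in> S" for s
  proof (rule bounded_subset[OF bounded_Times[OF bounded_cball bounded_cball]])
    have "norm ((1 / N n) *\<^sub>R x) \<le> 1" if "norm x \<le> N n" for n and x :: 'b
      using that N_nonneg[of n] by (cases "N n = 0") (simp_all add: divide_le_eq_1)
    then show "range (\<lambda>n. F n s) \<subseteq> cball 0 1 \<times> cball 0 1"
      using N_ge[OF \<open>s \<in> S\<close>] by (auto simp: F_def)
  qed
  ultimately obtain r where r: "strict_mono r" and "\<And>v. \<exists>l. (\<lambda>n. F (r n) v) \<longlonglongrightarrow> l"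
    using linear_sequence_convergent_subsequence[OF assms(1,2)] by blast
  then obtain L where L: "\<And>v. (\<lambda>n. F (r n) v) \<longlonglongrightarrow> L v"
    by metis
  have M: "(\<lambda>n. (1 / N (r n)) *\<^sub>R f (r n) v) \<longlonglongrightarrow> fst (L v)"
    and M': "(\<lambda>n. (1 / N (r n)) *\<^sub>R f' (r n) v) \<longlonglongrightarrow> snd (L v)" for v
    using tendsto_fst[OF L[of v]] tendsto_snd[OF L[of v]] by (simp_all add: F_def)
  let ?total = "\<lambda>n. \<Sum>s\<in>S. norm ((1 / N (r n)) *\<^sub>R f (r n) s) + norm ((1 / N (r n)) *\<^sub>R f' (r n) s)"
  have "\<forall>\<^sub>F n in sequentially. 1 \<le> N (r n)"
    using filterlim_compose[OF N_top filterlim_subseq[OF r]] by (simp add: filterlim_at_top)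
  then have "?total \<longlonglongrightarrow> 1"
    by (rule tendsto_eventually[OF eventually_mono])
      (simp add: N[symmetric] sum_divide_distrib[symmetric] add_divide_distrib[symmetric])
  moreover have "?total \<longlonglongrightarrow> (\<Sum>s\<in>S. norm (fst (L s)) + norm (snd (L s)))"
    by (intro tendsto_intros M M')
  ultimately have "(\<Sum>s\<in>S. norm (fst (L s)) + norm (snd (L s))) = 1"
    using LIMSEQ_unique by blast
  then have "\<exists>s\<in>S. fst (L s) \<noteq> 0 \<or> snd (L s) \<noteq> 0"
    by (metis (no_types, lifting) add_0 norm_zero sum.neutral zero_neq_one)
  with r M M' show thesis
    by (rule that)
qed

lemma floor_mult_div_tendsto: "(\<lambda>n. of_int \<lfloor>real (Suc n) * t\<rfloor> / real (Suc n)) \<longlonglongrightarrow> t"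
proof (rule tendsto_sandwich[of "\<lambda>n. t - 1 / real (Suc n)" _ _ "\<lambda>n. t"])
  show "\<forall>\<^sub>F n in sequentially. t - 1 / real (Suc n) \<le> of_int \<lfloor>real (Suc n) * t\<rfloor> / real (Suc n)"
  proof (intro always_eventually allI)
    fix n
    have "t - 1 / real (Suc n) = (real (Suc n) * t - 1) / real (Suc n)"
      by (simp add: field_simps)
    also have "\<dots> \<le> of_int \<lfloor>real (Suc n) * t\<rfloor> / real (Suc n)"
      by (intro divide_right_mono) linarith+
    finally show "t - 1 / real (Suc n) \<le> of_int \<lfloor>real (Suc n) * t\<rfloor> / real (Suc n)" .
  qed
  show "\<forall>\<^sub>F n in sequentially. of_int \<lfloor>real (Suc n) * t\<rfloor> / real (Suc n) \<le> t"
    by (intro always_eventually allI) (simp add: pos_divide_le_eq mult.commute del: of_nat_Suc)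
  show "(\<lambda>n. t - 1 / real (Suc n)) \<longlonglongrightarrow> t"
    using tendsto_diff[OF tendsto_const LIMSEQ_inverse_real_of_nat] by (simp add: divide_inverse)
qed simp

section \<open>The quadratic form in coordinates dual to the basis\<close>

locale universal_coxeter =
  fixes B :: "'v::euclidean_space \<Rightarrow> 'v \<Rightarrow> real" and D :: "'v set"
  assumes bilinear: "bilinear B"
    and symmetric: "\<And>u v. B u v = B v u"
    and finite_D: "finite D"
    and card_D: "card D \<ge> 3"
    and span_D: "span D = UNIV"
    and B_diag: "\<And>c. c \<in> D \<Longrightarrow> B c c = 1"
    and B_offdiag: "\<And>c d. c \<in> D \<Longrightarrow> d \<in> D \<Longrightarrow> c \<noteq> d \<Longrightarrow> B c d = -1"
begin

sublocale B: bounded_bilinear B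
  using bilinear bilinear_conv_bounded_bilinear by blast

text \<open>Since \<open>B c d = 2 [c = d] - 1\<close> on \<open>D\<close>, the coordinates \<open>coord c v\<close> of \<open>v\<close> in the basis
  \<open>D\<close> and their sum \<open>weight v\<close> satisfy \<open>B c v = 2 coord c v - weight v\<close>; pairing with \<open>\<Sum>D\<close>
  gives \<open>B (\<Sum>D) v = (2 - card D) weight v\<close>. The affine hyperplane \<open>H\<close> is \<open>weight v = 1\<close>.\<close>

definition weight :: "'v \<Rightarrow> real" where
  "weight v = - B (\<Sum>D) v / (real (card D) - 2)"

definition coord :: "'v \<Rightarrow> 'v \<Rightarrow> real" where
  "coord c v = (B c v + weight v) / 2"

sublocale weight: bounded_linear weight
  unfolding weight_def
  by (intro bounded_linear_divide[THEN bounded_linear_compose] bounded_linear_minus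
      B.bounded_linear_right)

lemma coord_linear: "bounded_linear (coord c)"
  unfolding coord_def
  by (intro bounded_linear_divide[THEN bounded_linear_compose] bounded_linear_add
      B.bounded_linear_right weight.bounded_linear)

lemma weight_basis: assumes "c \<in> D" shows "weight c = 1"
proof -
  have "B (\<Sum>D) c = (\<Sum>d\<in>D. 2 * (if d = c then 1 else 0) - 1)"
    unfolding B.sum_left by (rule sum.cong) (use assms in \<open>auto simp: B_diag B_offdiag\<close>)
  also have "\<dots> = 2 - real (card D)"
    using assms finite_D by (simp add: sum_subtractf sum_distrib_left[symmetric])
  finally show ?thesis
    using card_D by (simp add: weight_def)
qed

lemma coord_basis: "c \<in> D \<Longrightarrow> d \<in> D \<Longrightarrow> coord c d = (if c = d then 1 else 0)"
  by (simp add: coord_def weight_basis B_diag B_offdiag)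

lemma coord_expansion: "v = (\<Sum>c\<in>D. coord c v *\<^sub>R c)"
proof -
  obtain u where v: "v = (\<Sum>c\<in>D. u c *\<^sub>R c)"
    using span_finite[OF finite_D] span_D by auto
  have "coord d v = u d" if "d \<in> D" for d
  proof -
    have "coord d v = (\<Sum>c\<in>D. u c * coord d c)"
      unfolding v by (simp add: linear_sum linear_scale bounded_linear.linear[OF coord_linear])
    also have "\<dots> = u d"
      using that finite_D by (simp add: coord_basis if_distrib cong: if_cong)
    finally show ?thesis .
  qed
  then show ?thesis
    by (subst v) (rule sum.cong, simp_all)
qed

lemma weight_eq_sum_coord: "weight v = (\<Sum>c\<in>D. coord c v)"
  by (subst coord_expansion[of v]) (simp add: weight.sum weight.scaleR weight_basis)

lemma B_eq_sum_coord: "B u v = 2 * (\<Sum>c\<in>D. coord c u * coord c v) - weight u * weight v"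
proof -
  have "B c v = 2 * coord c v - weight v" for c
    by (simp add: coord_def field_simps)
  moreover have "B u v = (\<Sum>c\<in>D. coord c u * B c v)"
    by (subst coord_expansion[of u]) (simp add: B.sum_left B.scaleR_left)
  ultimately have "B u v = (\<Sum>c\<in>D. coord c u * (2 * coord c v - weight v))"
    by simp
  then show ?thesis
    by (simp add: weight_eq_sum_coord[of u] algebra_simps sum_subtractf sum_distrib_left
        sum_distrib_right)
qed

lemma eq_0_if_coord_eq_0: "(\<And>c. c \<in> D \<Longrightarrow> coord c v = 0) \<Longrightarrow> v = 0"
  by (subst coord_expansion) simp

lemma B_nonneg_if_weight_eq_0: "weight v = 0 \<Longrightarrow> B v v \<ge> 0"
  by (simp add: B_eq_sum_coord sum_nonneg)

lemma eq_0_if_weight_eq_0_null: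
  assumes "weight v = 0" and "B v v = 0" shows "v = 0"
proof (rule eq_0_if_coord_eq_0)
  have "(\<Sum>c\<in>D. (coord c v)\<^sup>2) = 0"
    using assms by (simp add: B_eq_sum_coord power2_eq_square)
  then show "coord c v = 0" if "c \<in> D" for c
    using that finite_D by (simp add: sum_nonneg_eq_0_iff)
qed

lemma weight_neq_0: "B v v \<le> 0 \<Longrightarrow> v \<noteq> 0 \<Longrightarrow> weight v \<noteq> 0"
  using B_nonneg_if_weight_eq_0 eq_0_if_weight_eq_0_null by fastforce

lemma B_nondegenerate: assumes "\<And>u. B u x = B u y" shows "x = y"
proof -
  have "coord c (x - y) = 0" if "c \<in> D" for c
    using assms[of c] assms[of "\<Sum>D"] by (simp add: coord_def weight_def B.diff_right)
  then show ?thesis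
    using eq_0_if_coord_eq_0[of "x - y"] by simp
qed

lemma B_diff_scaleR:
  "B (x *\<^sub>R u - y *\<^sub>R v) (x *\<^sub>R u - y *\<^sub>R v) = x\<^sup>2 * B u u - 2 * x * y * B u v + y\<^sup>2 * B v v"
  by (simp add: B.diff_left B.diff_right B.scaleR_left B.scaleR_right symmetric[of v u]
      power2_eq_square algebra_simps)

lemma null_orthogonal_imp_proportional:
  assumes "B u u = 0" "B v v = 0" "B u v = 0" shows "weight v *\<^sub>R u = weight u *\<^sub>R v"
proof -
  let ?w = "weight v *\<^sub>R u - weight u *\<^sub>R v"
  have "weight ?w = 0" and "B ?w ?w = 0"
    using assms by (simp_all add: weight.diff weight.scaleR B_diff_scaleR)
  then show ?thesis
    using eq_0_if_weight_eq_0_null[of ?w] by simp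
qed

lemma timelike_not_orthogonal_null:
  assumes "B u u < 0" "B b b = 0" "b \<noteq> 0" shows "B u b \<noteq> 0"
proof
  assume orth: "B u b = 0"
  let ?w = "weight b *\<^sub>R u - weight u *\<^sub>R b"
  have "weight b \<noteq> 0"
    using weight_neq_0 assms by simp
  then have "B ?w ?w < 0"
    using assms orth by (simp add: B_diff_scaleR mult_pos_neg)
  moreover have "weight ?w = 0"
    by (simp add: weight.diff weight.scaleR)
  ultimately show False
    using B_nonneg_if_weight_eq_0 by fastforce
qed

abbreviation H :: "'v set" where "H \<equiv> affine hull D"

abbreviation \<Gamma> :: "('v \<Rightarrow> 'v) set" where "\<Gamma> \<equiv> refl_group B D"

lemma affine_hull_D_eq: "H = {v. weight v = 1}"
proof (intro set_eqI iffI)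
  fix v assume "v \<in> H"
  then obtain u where "sum u D = 1" "v = (\<Sum>c\<in>D. u c *\<^sub>R c)"
    unfolding affine_hull_finite[OF finite_D] by auto
  then show "v \<in> {v. weight v = 1}"
    by (simp add: weight.sum weight.scaleR weight_basis)
next
  fix v assume "v \<in> {v. weight v = 1}"
  then show "v \<in> H"
    unfolding affine_hull_finite[OF finite_D] weight_eq_sum_coord
    using coord_expansion[of v] by (intro CollectI exI[of _ "\<lambda>c. coord c v"]) simp
qed

lemma hat_eq: assumes "weight v \<noteq> 0" shows "hat H v = (1 / weight v) *\<^sub>R v"
  unfolding hat_def
proof (rule the_equality)
  show "(1 / weight v) *\<^sub>R v \<in> H \<and> (\<exists>t. (1 / weight v) *\<^sub>R v = t *\<^sub>R v)"
    using assms by (auto simp: affine_hull_D_eq weight.scaleR)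
next
  fix p assume "p \<in> H \<and> (\<exists>t. p = t *\<^sub>R v)"
  then obtain t where "p = t *\<^sub>R v" "weight p = 1"
    by (auto simp: affine_hull_D_eq)
  with assms show "p = (1 / weight v) *\<^sub>R v"
    by (simp add: weight.scaleR field_simps)
qed

lemma tendsto_hat:
  assumes "(f \<longlongrightarrow> l) F" and "weight l \<noteq> 0"
  shows "((\<lambda>x. hat H (f x)) \<longlongrightarrow> hat H l) F"
proof -
  have "\<forall>\<^sub>F x in F. weight (f x) \<noteq> 0"
    using weight.tendsto[OF assms(1)] assms(2) by (rule tendsto_imp_eventually_ne)
  then have "\<forall>\<^sub>F x in F. (1 / weight (f x)) *\<^sub>R f x = hat H (f x)"
    by (rule eventually_mono) (simp add: hat_eq)
  moreover have "((\<lambda>x. (1 / weight (f x)) *\<^sub>R f x) \<longlongrightarrow> (1 / weight l) *\<^sub>R l) F"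
    using assms by (intro tendsto_intros weight.tendsto)
  ultimately show ?thesis
    using assms(2) by (simp add: hat_eq Lim_transform_eventually)
qed

section \<open>The reflection group\<close>

lemma reflB_linear: "linear (reflB B c)"
  by (rule linearI) (simp_all add: reflB_def B.add_right B.scaleR_right algebra_simps)

lemma reflB_isometry: "c \<in> D \<Longrightarrow> B (reflB B c u) (reflB B c v) = B u v"
  by (simp add: reflB_def B.diff_left B.diff_right B.scaleR_left B.scaleR_right B_diag
      symmetric[of u c] algebra_simps)

lemma reflB_involution: "c \<in> D \<Longrightarrow> reflB B c (reflB B c v) = v"
  by (simp add: reflB_def B.diff_right B.scaleR_right B_diag algebra_simps)

lemma refl_group_generator: "c \<in> D \<Longrightarrow> reflB B c \<in> \<Gamma>"
  by (metis comp_id refl_group.id_in refl_group.step)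

lemma refl_group_comp: "w \<in> \<Gamma> \<Longrightarrow> w' \<in> \<Gamma> \<Longrightarrow> w \<circ> w' \<in> \<Gamma>"
  by (induction rule: refl_group.induct) (auto simp: comp_assoc intro: refl_group.step)

lemma refl_group_linear: "w \<in> \<Gamma> \<Longrightarrow> linear w"
  by (induction rule: refl_group.induct)
    (auto intro: linear_compose[unfolded o_def] reflB_linear linear_id[unfolded id_def])

lemma refl_group_isometry: "w \<in> \<Gamma> \<Longrightarrow> B (w u) (w v) = B u v"
  by (induction arbitrary: u v rule: refl_group.induct) (auto simp: reflB_isometry)

lemma refl_group_inverse: "w \<in> \<Gamma> \<Longrightarrow> \<exists>h\<in>\<Gamma>. h \<circ> w = id \<and> w \<circ> h = id"
proof (induction rule: refl_group.induct)
  case id_in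
  show ?case using refl_group.id_in by (intro bexI[of _ id]) auto
next
  case (step c w)
  then obtain h where "h \<in> \<Gamma>" "h \<circ> w = id" "w \<circ> h = id"
    by blast
  with step.hyps(1) show ?case
    by (intro bexI[of _ "h \<circ> reflB B c"])
      (auto simp: fun_eq_iff reflB_involution pointfree_idE refl_group_comp refl_group_generator)
qed

lemma refl_group_inj: "w \<in> \<Gamma> \<Longrightarrow> inj w"
  by (metis inj_on_id inj_on_imageI2 refl_group_inverse)

lemma refl_group_weight_neq_0:
  assumes "w \<in> \<Gamma>" "B v v \<le> 0" "v \<noteq> 0" shows "weight (w v) \<noteq> 0"
proof (rule weight_neq_0)
  show "B (w v) (w v) \<le> 0"
    using assms by (simp add: refl_group_isometry)
  show "w v \<noteq> 0"
    using assms refl_group_inj[OF assms(1)] linear_0[OF refl_group_linear[OF assms(1)]]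
    by (metis injD)
qed

lemma refl_group_expansion: "w \<in> \<Gamma> \<Longrightarrow> w v = (\<Sum>c\<in>D. coord c v *\<^sub>R w c)"
  by (subst coord_expansion[of v])
    (simp add: linear_sum linear_scale refl_group_linear)

lemma hat_refl_group_hat: "w \<in> \<Gamma> \<Longrightarrow> weight v \<noteq> 0 \<Longrightarrow> hat H (w (hat H v)) = hat H (w v)"
  by (simp add: hat_eq linear_scale[OF refl_group_linear] hat_scaleR)

lemma hat_refl_group_eq_imp_eq:
  assumes "w \<in> \<Gamma>" "weight u = 1" "weight p = 1" "weight (w u) \<noteq> 0" "weight (w p) \<noteq> 0"
    and "hat H (w u) = hat H (w p)"
  shows "u = p"
proof -
  define k where "k = weight (w u) / weight (w p)"
  have "(1 / weight (w u)) *\<^sub>R w u = (1 / weight (w p)) *\<^sub>R w p"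
    using assms(4-6) by (simp add: hat_eq)
  then have "weight (w u) *\<^sub>R ((1 / weight (w u)) *\<^sub>R w u)
      = weight (w u) *\<^sub>R ((1 / weight (w p)) *\<^sub>R w p)"
    by simp
  then have "w u = w (k *\<^sub>R p)"
    using assms(4) by (simp add: k_def linear_scale[OF refl_group_linear[OF assms(1)]])
  then have "u = k *\<^sub>R p"
    using refl_group_inj[OF assms(1)] by (simp add: inj_eq)
  moreover from this have "k = 1"
    using assms(2,3) by (simp add: weight.scaleR)
  ultimately show ?thesis
    by simp
qed

section \<open>Discreteness\<close>

definition Zspan :: "'v set" where
  "Zspan = {v. \<forall>c\<in>D. coord c v \<in> \<int>}"

lemma basis_in_Zspan: "c \<in> D \<Longrightarrow> c \<in> Zspan"
  by (auto simp: Zspan_def coord_basis)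

lemma reflB_Zspan: assumes "c \<in> D" and "v \<in> Zspan" shows "reflB B c v \<in> Zspan"
proof -
  have "weight v \<in> \<int>"
    using assms(2) by (auto simp: Zspan_def weight_eq_sum_coord)
  moreover have "B c v = 2 * coord c v - weight v"
    by (simp add: coord_def field_simps)
  ultimately have "B c v \<in> \<int>"
    using assms by (auto simp: Zspan_def)
  moreover have "coord d (reflB B c v) = coord d v - 2 * B c v * coord d c" for d
    using bounded_linear.linear[OF coord_linear]
    by (simp add: reflB_def linear_diff linear_scale)
  ultimately show ?thesis
    using assms by (auto simp: Zspan_def coord_basis)
qed

lemma refl_group_Zspan: "w \<in> \<Gamma> \<Longrightarrow> v \<in> Zspan \<Longrightarrow> w v \<in> Zspan"
  by (induction arbitrary: v rule: refl_group.induct) (auto simp: reflB_Zspan)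

lemma finite_Zspan_cball: "finite (Zspan \<inter> cball 0 R)"
proof -
  have "\<forall>c. \<exists>K>0. \<forall>v. \<bar>coord c v\<bar> \<le> norm v * K"
    using bounded_linear.pos_bounded[OF coord_linear] by simp
  then obtain K where K: "\<And>c. K c > 0" "\<And>c v. \<bar>coord c v\<bar> \<le> norm v * K c"
    by metis
  let ?coords = "\<lambda>v. restrict (\<lambda>c. coord c v) D"
  have "inj_on ?coords (Zspan \<inter> cball 0 R)"
  proof (rule inj_onI)
    fix u v assume "?coords u = ?coords v"
    then have "coord c u = coord c v" if "c \<in> D" for c
      using that by (metis restrict_apply')
    then show "u = v"
      using coord_expansion[of u] coord_expansion[of v] by (metis (no_types, lifting) sum.cong)
  qed
  moreover have "?coords v \<in> PiE D (\<lambda>c. {x \<in> \<int>. \<bar>x\<bar> \<le> R * K c})"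
    if "v \<in> Zspan \<inter> cball 0 R" for v
  proof -
    have "\<bar>coord c v\<bar> \<le> R * K c" for c
      using that K(1)[of c] order_trans[OF K(2)[of c v] mult_right_mono[of "norm v" R "K c"]]
      by auto
    then show ?thesis
      using that by (auto simp: Zspan_def)
  qed
  then have "?coords ` (Zspan \<inter> cball 0 R) \<subseteq> PiE D (\<lambda>c. {x \<in> \<int>. \<bar>x\<bar> \<le> R * K c})"
    by blast
  moreover have "finite (PiE D (\<lambda>c. {x \<in> \<int>. \<bar>x\<bar> \<le> R * K c}))"
    by (intro finite_PiE finite_D finite_abs_int_segment)
  ultimately show ?thesis
    by (meson finite_imageD finite_subset)
qed

lemma finite_refl_group_bounded: "finite {w \<in> \<Gamma>. \<forall>c\<in>D. norm (w c) \<le> R}"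
proof -
  let ?F = "{w \<in> \<Gamma>. \<forall>c\<in>D. norm (w c) \<le> R}"
  have "inj_on (\<lambda>w. restrict w D) ?F"
  proof (rule inj_onI)
    fix u v assume "u \<in> ?F" "v \<in> ?F" "restrict u D = restrict v D"
    then have "u c = v c" if "c \<in> D" for c
      using that by (metis restrict_apply')
    then show "u = v"
      using \<open>u \<in> ?F\<close> \<open>v \<in> ?F\<close> refl_group_expansion
      by (metis (no_types, lifting) mem_Collect_eq sum.cong ext)
  qed
  moreover have "(\<lambda>w. restrict w D) ` ?F \<subseteq> PiE D (\<lambda>_. Zspan \<inter> cball 0 R)"
    using refl_group_Zspan basis_in_Zspan by auto
  moreover have "finite (PiE D (\<lambda>_. Zspan \<inter> cball 0 R))"
    by (intro finite_PiE finite_D finite_Zspan_cball)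
  ultimately show ?thesis
    by (meson finite_imageD finite_subset)
qed

section \<open>Parabolic elements\<close>

lemma reflB_reflB:
  assumes "a \<in> D" "b \<in> D" "a \<noteq> b"
  shows "reflB B a (reflB B b v) = v - (2 * B a v + 4 * B b v) *\<^sub>R a - (2 * B b v) *\<^sub>R b"
  using assms by (simp add: reflB_def B.diff_right B.scaleR_right B_diag B_offdiag algebra_simps)

text \<open>\<open>reflB B a \<circ> reflB B b\<close> is parabolic: it fixes the null vector \<open>a + b\<close>, and its
  powers grow quadratically in the direction of \<open>a + b\<close>.\<close>

lemma parabolic_power:
  assumes "a \<in> D" "b \<in> D" "a \<noteq> b"
  shows "((reflB B a \<circ> reflB B b) ^^ n) v
    = v - (2 * (real n)\<^sup>2 * (B a v + B b v) + 2 * real n * B b v) *\<^sub>R a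
        - (2 * (real n)\<^sup>2 * (B a v + B b v) - 2 * real n * B a v) *\<^sub>R b"
proof (induction n)
  case (Suc n)
  define X where "X = 2 * (real n)\<^sup>2 * (B a v + B b v) + 2 * real n * B b v"
  define Y where "Y = 2 * (real n)\<^sup>2 * (B a v + B b v) - 2 * real n * B a v"
  define w where "w = v - X *\<^sub>R a - Y *\<^sub>R b"
  have "B a w = B a v - X + Y" and "B b w = B b v + X - Y"
    using assms by (simp_all add: w_def B.diff_right B.scaleR_right B_diag B_offdiag)
  have shift: "w - p *\<^sub>R a - q *\<^sub>R b = v - (X + p) *\<^sub>R a - (Y + q) *\<^sub>R b" for p q
    by (simp add: w_def algebra_simps)
  have "((reflB B a \<circ> reflB B b) ^^ Suc n) v = reflB B a (reflB B b w)"
    unfolding funpow.simps(2) comp_apply Suc.IH w_def X_def Y_def by (rule refl)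
  also have "\<dots> = w - (2 * (B a v - X + Y) + 4 * (B b v + X - Y)) *\<^sub>R a
      - (2 * (B b v + X - Y)) *\<^sub>R b"
    using \<open>B a w = B a v - X + Y\<close> \<open>B b w = B b v + X - Y\<close>
    by (simp add: reflB_reflB[OF assms])
  also have "\<dots> = v - (X + (2 * (B a v - X + Y) + 4 * (B b v + X - Y))) *\<^sub>R a
      - (Y + 2 * (B b v + X - Y)) *\<^sub>R b"
    by (rule shift)
  also have "X + (2 * (B a v - X + Y) + 4 * (B b v + X - Y))
      = 2 * (real (Suc n))\<^sup>2 * (B a v + B b v) + 2 * real (Suc n) * B b v"
    by (simp add: X_def Y_def power2_eq_square algebra_simps)
  also have "Y + 2 * (B b v + X - Y)
      = 2 * (real (Suc n))\<^sup>2 * (B a v + B b v) - 2 * real (Suc n) * B a v"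
    by (simp add: X_def Y_def power2_eq_square algebra_simps)
  finally show ?case .
qed simp

lemma parabolic_power_rescaled_limit:
  assumes "a \<in> D" "b \<in> D" "a \<noteq> b"
  shows "(\<lambda>n. (1 / (real (Suc n))\<^sup>2) *\<^sub>R ((reflB B a \<circ> reflB B b) ^^ Suc n) v)
    \<longlonglongrightarrow> (- 2 * (B a v + B b v)) *\<^sub>R (a + b)"
proof -
  define N where "N n = real (Suc n)" for n
  define s where "s = B a v + B b v"
  have N: "N n \<noteq> 0" for n
    by (simp add: N_def)
  have eq: "(1 / (N n)\<^sup>2) *\<^sub>R ((reflB B a \<circ> reflB B b) ^^ Suc n) v
      = (1 / N n)\<^sup>2 *\<^sub>R v - (2 * s + 2 * B b v * (1 / N n)) *\<^sub>R a
        - (2 * s - 2 * B a v * (1 / N n)) *\<^sub>R b" for n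
  proof -
    have "(1 / (N n)\<^sup>2) *\<^sub>R ((reflB B a \<circ> reflB B b) ^^ Suc n) v = (1 / (N n)\<^sup>2) *\<^sub>R v
        - ((1 / (N n)\<^sup>2) * (2 * (N n)\<^sup>2 * s + 2 * N n * B b v)) *\<^sub>R a
        - ((1 / (N n)\<^sup>2) * (2 * (N n)\<^sup>2 * s - 2 * N n * B a v)) *\<^sub>R b"
      unfolding parabolic_power[OF assms] N_def s_def by (simp add: scaleR_diff_right)
    also have "(1 / (N n)\<^sup>2) * (2 * (N n)\<^sup>2 * s + 2 * N n * B b v) = 2 * s + 2 * B b v * (1 / N n)"
      using N[of n] by (simp add: field_simps power2_eq_square)
    also have "(1 / (N n)\<^sup>2) * (2 * (N n)\<^sup>2 * s - 2 * N n * B a v) = 2 * s - 2 * B a v * (1 / N n)"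
      using N[of n] by (simp add: field_simps power2_eq_square)
    finally show ?thesis
      by (simp only: power_one_over)
  qed
  have "(\<lambda>n. 1 / N n) \<longlonglongrightarrow> 0"
    using LIMSEQ_inverse_real_of_nat by (simp add: N_def divide_inverse)
  then have "(\<lambda>n. (1 / (N n)\<^sup>2) *\<^sub>R ((reflB B a \<circ> reflB B b) ^^ Suc n) v)
      \<longlonglongrightarrow> 0\<^sup>2 *\<^sub>R v - (2 * s + 2 * B b v * 0) *\<^sub>R a - (2 * s - 2 * B a v * 0) *\<^sub>R b"
    unfolding eq by (intro tendsto_intros)
  moreover have "0\<^sup>2 *\<^sub>R v - (2 * s + 2 * B b v * 0) *\<^sub>R a - (2 * s - 2 * B a v * 0) *\<^sub>R b
      = (- 2 * s) *\<^sub>R (a + b)"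
    by (simp add: scaleR_add_right)
  ultimately show ?thesis
    by (simp only: N_def s_def)
qed

lemma parabolic_power_in_refl_group:
  "a \<in> D \<Longrightarrow> b \<in> D \<Longrightarrow> (reflB B a \<circ> reflB B b) ^^ n \<in> \<Gamma>"
  by (induction n) (auto intro: refl_group.id_in refl_group_comp refl_group_generator)

section \<open>Divergent sequences in the group\<close>

lemma rescaled_refl_group_limit_null:
  assumes "\<And>n. g n \<in> \<Gamma>" and "filterlim N at_top sequentially"
    and M: "\<And>v. (\<lambda>n. (1 / N n) *\<^sub>R g n v) \<longlonglongrightarrow> M v"
  shows "B (M u) (M v) = 0"
proof -
  have "(\<lambda>n. 1 / N n) \<longlonglongrightarrow> 0"
    using assms(2) by (simp add: tendsto_inverse_0_at_top divide_inverse)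
  then have "(\<lambda>n. (1 / N n)\<^sup>2 * B u v) \<longlonglongrightarrow> 0"
    using tendsto_mult[OF tendsto_power[of _ 0 _ 2] tendsto_const[of "B u v"]] by simp
  moreover have "B ((1 / N n) *\<^sub>R g n u) ((1 / N n) *\<^sub>R g n v) = (1 / N n)\<^sup>2 * B u v" for n
    by (simp add: B.scaleR_left B.scaleR_right refl_group_isometry assms(1) power2_eq_square)
  ultimately show ?thesis
    using B.tendsto[OF M[of u] M[of v]] by (simp add: LIMSEQ_unique)
qed

lemma rescaled_refl_group_limit_adjoint:
  assumes "\<And>n. g n \<in> \<Gamma>" and "\<And>n. g n \<circ> h n = id"
    and M: "\<And>v. (\<lambda>n. (1 / N n) *\<^sub>R g n v) \<longlonglongrightarrow> M v"
    and M': "\<And>v. (\<lambda>n. (1 / N n) *\<^sub>R h n v) \<longlonglongrightarrow> M' v"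
  shows "B (M u) v = B u (M' v)"
proof -
  have "B (g n u) v = B u (h n v)" for n
    using refl_group_isometry[OF assms(1), of n u "h n v"] assms(2)[of n]
    by (simp add: pointfree_idE)
  then have "B ((1 / N n) *\<^sub>R g n u) v = B u ((1 / N n) *\<^sub>R h n v)" for n
    by (simp add: B.scaleR_left B.scaleR_right)
  then show ?thesis
    using B.tendsto[OF M[of u] tendsto_const[of v]] B.tendsto[OF tendsto_const[of u] M'[of v]]
    by (simp add: LIMSEQ_unique)
qed

text \<open>\<open>g n\<close> is normalised together with its inverse, so that the two limits are \<open>B\<close>-adjoint and
  not both zero.\<close>

lemma escaping_sequence_rescaled_limit:
  assumes g: "\<And>n. g n \<in> \<Gamma>"
    and escape: "\<And>K. \<forall>\<^sub>F n in sequentially. \<exists>c\<in>D. K < norm (g n c)"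
  obtains r M M' where "strict_mono r"
    and "\<And>u v. B (M u) (M v) = 0" and "\<And>u v. B (M' u) (M' v) = 0"
    and "\<And>u v. B (M u) v = B u (M' v)" and "\<exists>v. M v \<noteq> 0 \<or> M' v \<noteq> 0"
    and "\<And>y. M y \<noteq> 0 \<Longrightarrow> (\<lambda>n. hat H (g (r n) y)) \<longlonglongrightarrow> hat H (M y)"
proof -
  have "\<forall>n. \<exists>h. h \<in> \<Gamma> \<and> g n \<circ> h = id"
    using refl_group_inverse[OF g] by blast
  then obtain h where h: "\<And>n. h n \<in> \<Gamma>" "\<And>n. g n \<circ> h n = id"
    by metis
  define N where "N n = (\<Sum>c\<in>D. norm (g n c) + norm (h n c))" for n
  have N_top: "filterlim N at_top sequentially"
    unfolding filterlim_at_top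
  proof
    fix K
    have bound: "norm (g n c) \<le> N n" if "c \<in> D" for n c
      unfolding N_def by (rule norm_le_sum_norm_add[OF finite_D that])
    show "\<forall>\<^sub>F n in sequentially. K \<le> N n"
      using escape[of K] by (rule eventually_mono) (meson bound less_imp_le order.trans)
  qed
  obtain r M M' where r: "strict_mono r"
    and M: "\<And>v. (\<lambda>n. (1 / N (r n)) *\<^sub>R g (r n) v) \<longlonglongrightarrow> M v"
    and M': "\<And>v. (\<lambda>n. (1 / N (r n)) *\<^sub>R h (r n) v) \<longlonglongrightarrow> M' v"
    and nonzero: "\<exists>c\<in>D. M c \<noteq> 0 \<or> M' c \<noteq> 0"
    using normalized_linear_pair_limit[OF finite_D span_D refl_group_linear[OF g]
        refl_group_linear[OF h(1)] N_def N_top] by blast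
  have N_r_top: "filterlim (\<lambda>n. N (r n)) at_top sequentially"
    using filterlim_compose[OF N_top filterlim_subseq[OF r]] by simp
  note null = rescaled_refl_group_limit_null[OF g N_r_top M]
  show thesis
  proof
    show "strict_mono r" and "B (M u) (M v) = 0" and "B (M' u) (M' v) = 0"
      and "B (M u) v = B u (M' v)" and "\<exists>v. M v \<noteq> 0 \<or> M' v \<noteq> 0" for u v
      using r null rescaled_refl_group_limit_null[OF h(1) N_r_top M']
        rescaled_refl_group_limit_adjoint[OF g h(2) M M'] nonzero
      by blast+
    fix y assume "M y \<noteq> 0"
    then have "weight (M y) \<noteq> 0"
      using weight_neq_0 null by simp
    then have "(\<lambda>n. hat H ((1 / N (r n)) *\<^sub>R g (r n) y)) \<longlonglongrightarrow> hat H (M y)"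
      by (rule tendsto_hat[OF M])
    moreover have "\<forall>\<^sub>F n in sequentially. 1 \<le> N (r n)"
      using N_r_top by (simp add: filterlim_at_top)
    then have "\<forall>\<^sub>F n in sequentially. 1 / N (r n) \<noteq> 0"
      by (rule eventually_mono) simp
    ultimately show "(\<lambda>n. hat H (g (r n) y)) \<longlonglongrightarrow> hat H (M y)"
      by (rule Lim_transform_eventually[OF _ eventually_mono]) (simp add: hat_scaleR)
  qed
qed

lemma escaping_sequence_attracts:
  assumes "\<And>n. g n \<in> \<Gamma>" and "\<And>K. \<forall>\<^sub>F n in sequentially. \<exists>c\<in>D. K < norm (g n c)"
  obtains r a b where "strict_mono r" and "b \<noteq> 0" and "B b b = 0"
    and "\<And>y. B y b \<noteq> 0 \<Longrightarrow> (\<lambda>n. hat H (g (r n) y)) \<longlonglongrightarrow> a"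
proof -
  obtain r M M' where r: "strict_mono r"
    and null: "\<And>u v. B (M u) (M v) = 0" and null': "\<And>u v. B (M' u) (M' v) = 0"
    and adjoint: "\<And>u v. B (M u) v = B u (M' v)" and nonzero: "\<exists>v. M v \<noteq> 0 \<or> M' v \<noteq> 0"
    and lim: "\<And>y. M y \<noteq> 0 \<Longrightarrow> (\<lambda>n. hat H (g (r n) y)) \<longlonglongrightarrow> hat H (M y)"
    using escaping_sequence_rescaled_limit[OF assms] by blast
  have exists_B_neq_0: "\<exists>u. B u x \<noteq> 0" if "x \<noteq> 0" for x
    using that B_nondegenerate[of x 0] by (auto simp: B.zero_right)
  have "\<exists>u. M u \<noteq> 0 \<and> (\<exists>v. M' v \<noteq> 0)"
    using nonzero exists_B_neq_0 by (metis adjoint symmetric B.zero_right)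
  then obtain u v where u: "M u \<noteq> 0" and v: "M' v \<noteq> 0"
    by blast
  have weight_M: "weight (M y) \<noteq> 0" if "M y \<noteq> 0" for y
    using that weight_neq_0 null by simp
  show thesis
  proof
    show "strict_mono r" "M' v \<noteq> 0" "B (M' v) (M' v) = 0"
      using r v null' by simp_all
    fix y assume "B y (M' v) \<noteq> 0"
    then have "M y \<noteq> 0"
      using adjoint[of y v] by (auto simp: B.zero_left)
    moreover have "weight (M u) *\<^sub>R M y = weight (M y) *\<^sub>R M u"
      by (rule null_orthogonal_imp_proportional) (simp_all add: null)
    ultimately have "hat H (M y) = hat H (M u)"
      using weight_M u by (metis hat_scaleR)
    then show "(\<lambda>n. hat H (g (r n) y)) \<longlonglongrightarrow> hat H (M u)"
      using lim[OF \<open>M y \<noteq> 0\<close>] by simp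
  qed
qed

section \<open>Circles in the faces\<close>

text \<open>A rational parametrisation of the circle in which the null cone meets the face spanned by
  \<open>a\<close>, \<open>b\<close>, \<open>c\<close>.\<close>

definition circle_point :: "'v \<Rightarrow> 'v \<Rightarrow> 'v \<Rightarrow> real \<Rightarrow> real \<Rightarrow> 'v" where
  "circle_point a b c m n = m\<^sup>2 *\<^sub>R a + n\<^sup>2 *\<^sub>R b + (m + n)\<^sup>2 *\<^sub>R c"

lemma circle_point_scale: "circle_point a b c (k * m) (k * n) = k\<^sup>2 *\<^sub>R circle_point a b c m n"
proof -
  have "(k * m + k * n)\<^sup>2 = k\<^sup>2 * (m + n)\<^sup>2"
    by algebra
  then show ?thesis
    by (simp add: circle_point_def power_mult_distrib scaleR_add_right)
qed

definition in_tangency_orbit :: "'v \<Rightarrow> 'v \<Rightarrow> 'v \<Rightarrow> 'v \<Rightarrow> bool" where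
  "in_tangency_orbit a b c v \<longleftrightarrow>
     (\<exists>w\<in>\<Gamma>. \<exists>k t. k \<noteq> 0 \<and> t \<in> {a + c, b + c, a + b} \<and> v = k *\<^sub>R w t)"

lemma in_tangency_orbit_base:
  "k \<noteq> 0 \<Longrightarrow> t \<in> {a + c, b + c, a + b} \<Longrightarrow> in_tangency_orbit a b c (k *\<^sub>R t)"
  unfolding in_tangency_orbit_def
  by (intro bexI[of _ id] exI[of _ k] exI[of _ t]) (auto intro: refl_group.id_in)

lemma in_tangency_orbit_reflB:
  assumes "d \<in> D" and "in_tangency_orbit a b c v" shows "in_tangency_orbit a b c (reflB B d v)"
proof -
  obtain w k t where "w \<in> \<Gamma>" "k \<noteq> 0" "t \<in> {a + c, b + c, a + b}" "v = k *\<^sub>R w t"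
    using assms(2) by (auto simp: in_tangency_orbit_def)
  then show ?thesis
    unfolding in_tangency_orbit_def using assms(1)
    by (intro bexI[of _ "reflB B d \<circ> w"] exI[of _ k] exI[of _ t])
      (simp_all add: refl_group.step linear_scale[OF reflB_linear])
qed

lemma in_tangency_orbit_circle_point_base:
  fixes m n :: int
  assumes "(m, n) \<noteq> (0, 0)" and "n = 0 \<or> m = 0 \<or> m = - n"
  shows "in_tangency_orbit a b c (circle_point a b c (of_int m) (of_int n))"
proof -
  consider "n = 0" "m \<noteq> 0" | "m = 0" "n \<noteq> 0" | "m = - n" "m \<noteq> 0"
    using assms by auto
  then show ?thesis
  proof cases
    case 1
    then show ?thesis
      using in_tangency_orbit_base[of "(of_int m)\<^sup>2" "a + c"]
      by (simp add: circle_point_def scaleR_add_right)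
  next
    case 2
    then show ?thesis
      using in_tangency_orbit_base[of "(of_int n)\<^sup>2" "b + c"]
      by (simp add: circle_point_def scaleR_add_right)
  next
    case 3
    then show ?thesis
      using in_tangency_orbit_base[of "(of_int m)\<^sup>2" "a + b"]
      by (simp add: circle_point_def scaleR_add_right)
  qed
qed

context
  fixes a b c assumes abc: "a \<in> D" "b \<in> D" "c \<in> D" "a \<noteq> b" "a \<noteq> c" "b \<noteq> c"
begin

lemma B_abc:
  "B a a = 1" "B b b = 1" "B c c = 1" "B a b = -1" "B b a = -1" "B a c = -1" "B c a = -1"
  "B b c = -1" "B c b = -1"
  using abc B_diag B_offdiag by auto

lemma reflB_a_circle_point:
  "reflB B a (circle_point a b c m n) = circle_point a b c (m + 2 * n) (- n)"
  by (intro B_nondegenerate) (simp add: circle_point_def reflB_def B.add_right B.diff_right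
      B.scaleR_right B_abc power2_eq_square algebra_simps)

lemma reflB_b_circle_point:
  "reflB B b (circle_point a b c m n) = circle_point a b c (- m) (2 * m + n)"
  by (intro B_nondegenerate) (simp add: circle_point_def reflB_def B.add_right B.diff_right
      B.scaleR_right B_abc power2_eq_square algebra_simps)

lemma reflB_c_circle_point:
  "reflB B c (circle_point a b c m n) = circle_point a b c m (- n)"
  by (intro B_nondegenerate) (simp add: circle_point_def reflB_def B.add_right B.diff_right
      B.scaleR_right B_abc power2_eq_square algebra_simps)

text \<open>A Euclid-type descent: unless \<open>(m, n)\<close> is a multiple of \<open>(1, 0)\<close>, \<open>(0, 1)\<close> or
  \<open>(1, -1)\<close>, one of the reflections in \<open>a\<close>, \<open>b\<close>, \<open>c\<close> decreases \<open>\<bar>m\<bar> + \<bar>n\<bar>\<close>.\<close>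

lemma in_tangency_orbit_circle_point:
  fixes m n :: int
  assumes "(m, n) \<noteq> (0, 0)"
  shows "in_tangency_orbit a b c (circle_point a b c (of_int m) (of_int n))"
  using assms
proof (induction "nat \<bar>m\<bar> + nat \<bar>n\<bar>" arbitrary: m n rule: less_induct)
  case less
  let ?p = "\<lambda>m n :: int. circle_point a b c (of_int m) (of_int n)"
  have opposite: "in_tangency_orbit a b c (?p m n')"
    if same_abs: "\<bar>n'\<bar> = \<bar>n\<bar>" and opposite_signs: "m * n' \<le> 0" for n'
  proof -
    consider "n' = 0 \<or> m = 0 \<or> m = - n'" | "\<bar>n'\<bar> < \<bar>m\<bar>" "n' \<noteq> 0" | "\<bar>m\<bar> < \<bar>n'\<bar>" "m \<noteq> 0"
      using opposite_signs unfolding mult_le_0_iff by linarith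
    then show ?thesis
    proof cases
      case 1
      then show ?thesis
        using less.prems same_abs by (intro in_tangency_orbit_circle_point_base) auto
    next
      case 2
      have "\<bar>m + 2 * n'\<bar> < \<bar>m\<bar>"
        using 2 opposite_signs unfolding mult_le_0_iff abs_if by auto
      then have "in_tangency_orbit a b c (?p (m + 2 * n') (- n'))"
        using 2 same_abs by (intro less.hyps) auto
      from in_tangency_orbit_reflB[OF abc(1) this] show ?thesis
        using reflB_a_circle_point[of "of_int (m + 2 * n')" "- of_int n'"] by simp
    next
      case 3
      have "\<bar>2 * m + n'\<bar> < \<bar>n'\<bar>"
        using 3 opposite_signs unfolding mult_le_0_iff abs_if by auto
      then have "in_tangency_orbit a b c (?p (- m) (2 * m + n'))"
        using 3 same_abs by (intro less.hyps) auto
      from in_tangency_orbit_reflB[OF abc(2) this] show ?thesis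
        using reflB_b_circle_point[of "- of_int m" "of_int (2 * m + n')"] by simp
    qed
  qed
  show ?case
  proof (cases "m * n \<le> 0")
    case True
    then show ?thesis by (rule opposite[OF refl])
  next
    case False
    then have "in_tangency_orbit a b c (?p m (- n))"
      by (intro opposite) auto
    from in_tangency_orbit_reflB[OF abc(3) this] show ?thesis
      using reflB_c_circle_point[of "of_int m" "- of_int n"] by simp
  qed
qed

lemma null_in_convex_hull_circle_point:
  assumes "p \<in> convex hull {a, b, c}" and "B p p = 0"
  obtains u v where "p = circle_point a b c u v"
proof -
  obtain x y z where xyz: "0 \<le> x" "0 \<le> y" "0 \<le> z" "x + y + z = 1"
    and p: "p = x *\<^sub>R a + y *\<^sub>R b + z *\<^sub>R c"
    using assms(1) unfolding convex_hull_3 by auto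
  have "B p p = x\<^sup>2 + y\<^sup>2 + z\<^sup>2 - 2 * x * y - 2 * y * z - 2 * x * z"
    unfolding p by (simp add: B.add_left B.add_right B.scaleR_left B.scaleR_right B_abc
        power2_eq_square algebra_simps)
  then have "(z - x - y)\<^sup>2 = 4 * x * y"
    using assms(2) by (simp add: power2_eq_square algebra_simps)
  also have "4 * x * y = (2 * sqrt x * sqrt y)\<^sup>2"
    using xyz by (simp add: power_mult_distrib)
  finally have square: "(z - x - y)\<^sup>2 = (2 * sqrt x * sqrt y)\<^sup>2" .
  obtain v where "v\<^sup>2 = y" "(sqrt x + v)\<^sup>2 = z"
  proof (cases "z - x - y = 2 * sqrt x * sqrt y")
    case True
    then show thesis
      using that[of "sqrt y"] xyz by (simp add: power2_sum algebra_simps)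
  next
    case False
    then have "z - x - y = - (2 * sqrt x * sqrt y)"
      using square by (metis power2_eq_iff)
    then show thesis
      using that[of "- sqrt y"] xyz by (simp add: power2_diff algebra_simps)
  qed
  with xyz have "p = circle_point a b c (sqrt x) v"
    by (simp add: p circle_point_def)
  then show thesis
    by (rule that)
qed

end

abbreviation face_circle :: "'v \<Rightarrow> 'v set" where
  "face_circle c \<equiv> {v. B v v = 0} \<inter> H \<inter> convex hull (D - {c})"

abbreviation gasket :: "'v set" where
  "gasket \<equiv> \<Union>w\<in>\<Gamma>. (\<lambda>x. hat H (w x)) ` (\<Union>c\<in>D. face_circle c)"

lemma three_elements_of_D:
  obtains d1 d2 d3 where "d1 \<in> D" "d2 \<in> D" "d3 \<in> D" "d1 \<noteq> d2" "d1 \<noteq> d3" "d2 \<noteq> d3"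
proof -
  obtain T where T: "T \<subseteq> D" "card T = 3" "finite T"
    by (rule obtain_subset_with_card_n[OF card_D])
  then obtain x y z where "T = {x, y, z}" "x \<noteq> y" "y \<noteq> z" "x \<noteq> z"
    unfolding card_3_iff by blast
  with T(1) show thesis
    by (intro that[of x y z]) auto
qed

lemma tangency_point_in_face_circle:
  assumes "a \<in> D" "b \<in> D" "c \<in> D" "a \<noteq> b" "a \<noteq> c" "b \<noteq> c"
  shows "(1 / 2) *\<^sub>R (a + b) \<in> face_circle c"
proof -
  have "(1 / 2) *\<^sub>R a + (1 / 2) *\<^sub>R b \<in> convex hull (D - {c})"
    using assms by (intro convexD[OF convex_convex_hull] hull_inc) auto
  then show ?thesis
    using assms by (simp add: affine_hull_D_eq weight.add weight.scaleR weight_basis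
        B.add_left B.add_right B.scaleR_left B.scaleR_right B_diag B_offdiag scaleR_add_right)
qed

lemma face_circle_point_not_orthogonal:
  assumes "b \<noteq> 0" and "B b b = 0"
  obtains q c where "q \<in> face_circle c" and "c \<in> D" and "B q b \<noteq> 0"
proof -
  obtain d1 d2 d3 where d: "d1 \<in> D" "d2 \<in> D" "d3 \<in> D" "d1 \<noteq> d2" "d1 \<noteq> d3" "d2 \<noteq> d3"
    by (rule three_elements_of_D)
  let ?q1 = "(1 / 2) *\<^sub>R (d1 + d2)" and ?q2 = "(1 / 2) *\<^sub>R (d1 + d3)"
  have q1: "?q1 \<in> face_circle d3"
    by (rule tangency_point_in_face_circle[OF d])
  have q2: "?q2 \<in> face_circle d2"
    by (rule tangency_point_in_face_circle[OF d(1,3,2,5,4) not_sym[OF d(6)]])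
  have "B ?q1 b \<noteq> 0 \<or> B ?q2 b \<noteq> 0"
  proof (rule ccontr)
    assume "\<not> ?thesis"
    then have orth: "B ?q1 b = 0" "B ?q2 b = 0"
      by simp_all
    have null: "B ?q1 ?q1 = 0" "B ?q2 ?q2 = 0" and weights: "weight ?q1 = 1" "weight ?q2 = 1"
      using q1 q2 by (auto simp: affine_hull_D_eq)
    have "weight b *\<^sub>R ?q1 = b" "weight b *\<^sub>R ?q2 = b"
      using null_orthogonal_imp_proportional[OF null(1) assms(2) orth(1)]
        null_orthogonal_imp_proportional[OF null(2) assms(2) orth(2)]
      unfolding weights scaleR_one .
    moreover have "weight b \<noteq> 0"
      using weight_neq_0 assms by simp
    ultimately have "?q1 = ?q2"
      by (metis scaleR_left_imp_eq)
    then show False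
      using d(6) by simp
  qed
  then show thesis
  proof
    assume "B ?q1 b \<noteq> 0"
    with q1 d(3) show thesis by (rule that)
  next
    assume "B ?q2 b \<noteq> 0"
    with q2 d(2) show thesis by (rule that)
  qed
qed



end


section \<open>The limit set\<close>

locale universal_coxeter_orbit = universal_coxeter B D
  for B :: "'v::euclidean_space \<Rightarrow> 'v \<Rightarrow> real" and D +
  fixes x0 :: 'v
  assumes x0_timelike: "B x0 x0 < 0" and x0_in_H: "x0 \<in> H"
begin

abbreviation \<Lambda> :: "'v set" where "\<Lambda> \<equiv> limit_set \<Gamma> (\<lambda>w x. hat H (w x)) x0"

lemma weight_x0: "weight x0 = 1"
  using x0_in_H by (simp add: affine_hull_D_eq)

lemma orbit_weight_neq_0: "w \<in> \<Gamma> \<Longrightarrow> weight (w x0) \<noteq> 0"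
  using refl_group_weight_neq_0[of w x0] x0_timelike weight_x0 by fastforce

lemma orbit_point_timelike:
  assumes "w \<in> \<Gamma>" shows "weight (hat H (w x0)) = 1" "B (hat H (w x0)) (hat H (w x0)) < 0"
proof -
  show "weight (hat H (w x0)) = 1"
    using orbit_weight_neq_0[OF assms] by (simp add: hat_eq weight.scaleR)
  have "B (hat H (w x0)) (hat H (w x0)) = (1 / weight (w x0))\<^sup>2 * B x0 x0"
    using orbit_weight_neq_0[OF assms]
    by (simp add: hat_eq B.scaleR_left B.scaleR_right refl_group_isometry[OF assms]
        power2_eq_square)
  then show "B (hat H (w x0)) (hat H (w x0)) < 0"
    using orbit_weight_neq_0[OF assms] x0_timelike by (simp add: mult_pos_neg)
qed

lemma closed_limit_set: "closed \<Lambda>"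
  unfolding limit_set_def by (rule closed_limpts)

lemma limit_set_iff:
  "p \<in> \<Lambda> \<longleftrightarrow>
     (\<exists>g. (\<forall>n. g n \<in> \<Gamma> \<and> hat H (g n x0) \<noteq> p) \<and> (\<lambda>n. hat H (g n x0)) \<longlonglongrightarrow> p)"
proof
  assume "p \<in> \<Lambda>"
  then obtain f where f: "\<And>n. f n \<in> (\<lambda>w. hat H (w x0)) ` \<Gamma> - {p}" "f \<longlonglongrightarrow> p"
    unfolding limit_set_def islimpt_sequential by blast
  then have "\<forall>n. \<exists>w. w \<in> \<Gamma> \<and> f n = hat H (w x0)"
    by blast
  then obtain g where g: "\<And>n. g n \<in> \<Gamma> \<and> f n = hat H (g n x0)"
    by metis
  then have "f = (\<lambda>n. hat H (g n x0))"
    by auto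
  with f g show "\<exists>g. (\<forall>n. g n \<in> \<Gamma> \<and> hat H (g n x0) \<noteq> p) \<and> (\<lambda>n. hat H (g n x0)) \<longlonglongrightarrow> p"
    by (intro exI[of _ g]) auto
next
  assume "\<exists>g. (\<forall>n. g n \<in> \<Gamma> \<and> hat H (g n x0) \<noteq> p) \<and> (\<lambda>n. hat H (g n x0)) \<longlonglongrightarrow> p"
  then show "p \<in> \<Lambda>"
    unfolding limit_set_def islimpt_sequential by fastforce
qed

lemma limit_set_in_closed_ball: assumes "p \<in> \<Lambda>" shows "weight p = 1" "B p p \<le> 0"
proof -
  have closed: "closed {v. weight v = 1 \<and> B v v \<le> 0}"
    by (intro closed_Collect_conj closed_Collect_eq closed_Collect_le continuous_intros
        weight.continuous_on B.continuous_on)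
  obtain g where g: "\<And>n. g n \<in> \<Gamma>" "(\<lambda>n. hat H (g n x0)) \<longlonglongrightarrow> p"
    using assms limit_set_iff by blast
  have "hat H (g n x0) \<in> {v. weight v = 1 \<and> B v v \<le> 0}" for n
    using orbit_point_timelike[OF g(1)[of n]] by simp
  then have "p \<in> {v. weight v = 1 \<and> B v v \<le> 0}"
    using g(2) by (rule closed_sequentially[OF closed])
  then show "weight p = 1" "B p p \<le> 0"
    by auto
qed

lemma limit_set_invariant: assumes "p \<in> \<Lambda>" "w \<in> \<Gamma>" shows "hat H (w p) \<in> \<Lambda>"
proof -
  obtain g where g: "\<And>n. g n \<in> \<Gamma>" "\<And>n. hat H (g n x0) \<noteq> p" "(\<lambda>n. hat H (g n x0)) \<longlonglongrightarrow> p"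
    using assms(1) unfolding limit_set_iff by blast
  have weight_p: "weight p = 1" and "B p p \<le> 0"
    using limit_set_in_closed_ball[OF assms(1)] by auto
  have "p \<noteq> 0"
    using weight_p by auto
  then have weight_wp: "weight (w p) \<noteq> 0"
    by (rule refl_group_weight_neq_0[OF assms(2) \<open>B p p \<le> 0\<close>])
  have weight_w_orbit: "weight (w (hat H (g n x0))) \<noteq> 0" for n
  proof (rule refl_group_weight_neq_0[OF assms(2)])
    show "B (hat H (g n x0)) (hat H (g n x0)) \<le> 0"
      using orbit_point_timelike(2)[OF g(1)] by (rule less_imp_le)
    show "hat H (g n x0) \<noteq> 0"
      using orbit_point_timelike(1)[OF g(1), of n] by auto
  qed
  have orbit_eq: "hat H ((w \<circ> g n) x0) = hat H (w (hat H (g n x0)))" for n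
    using hat_refl_group_hat[OF assms(2) orbit_weight_neq_0[OF g(1)]] by simp
  have "bounded_linear w"
    using refl_group_linear[OF assms(2)] by (simp add: linear_conv_bounded_linear)
  then have "(\<lambda>n. w (hat H (g n x0))) \<longlonglongrightarrow> w p"
    using g(3) by (rule bounded_linear.tendsto)
  then have "(\<lambda>n. hat H ((w \<circ> g n) x0)) \<longlonglongrightarrow> hat H (w p)"
    unfolding orbit_eq using weight_wp by (rule tendsto_hat)
  moreover have "hat H ((w \<circ> g n) x0) \<noteq> hat H (w p)" for n
    unfolding orbit_eq
    using hat_refl_group_eq_imp_eq[OF assms(2) orbit_point_timelike(1)[OF g(1)] weight_p
        weight_w_orbit weight_wp] g(2) by blast
  moreover have "w \<circ> g n \<in> \<Gamma>" for n
    using refl_group_comp[OF assms(2) g(1)] .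
  ultimately show ?thesis
    unfolding limit_set_iff by (intro exI[of _ "\<lambda>n. w \<circ> g n"]) simp
qed

lemma tangency_point_in_limit_set:
  assumes ab: "a \<in> D" "b \<in> D" "a \<noteq> b" shows "(1 / 2) *\<^sub>R (a + b) \<in> \<Lambda>"
proof -
  define g where "g n = (reflB B a \<circ> reflB B b) ^^ Suc n" for n
  define s where "s = B a x0 + B b x0"
  have g: "g n \<in> \<Gamma>" for n
    unfolding g_def by (rule parabolic_power_in_refl_group[OF ab(1,2)])
  have weight_ab: "weight (a + b) = 2" and null_ab: "B (a + b) (a + b) = 0"
    using ab by (simp_all add: weight.add weight_basis B.add_left B.add_right B_diag B_offdiag)
  then have "B x0 (a + b) \<noteq> 0"
    using timelike_not_orthogonal_null[OF x0_timelike] by force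
  then have s: "s \<noteq> 0"
    by (simp add: s_def B.add_right symmetric[of x0])
  have "(\<lambda>n. hat H ((1 / (real (Suc n))\<^sup>2) *\<^sub>R g n x0)) \<longlonglongrightarrow> hat H ((- 2 * s) *\<^sub>R (a + b))"
    using parabolic_power_rescaled_limit[OF ab] s weight_ab
    by (intro tendsto_hat) (simp_all add: g_def s_def weight.scaleR weight.neg)
  moreover have "hat H ((- 2 * s) *\<^sub>R (a + b)) = (1 / 2) *\<^sub>R (a + b)"
    using hat_scaleR[of "- 2 * s" H "a + b"] hat_eq[of "a + b"] s weight_ab by simp
  moreover have "hat H ((1 / (real (Suc n))\<^sup>2) *\<^sub>R g n x0) = hat H (g n x0)" for n
    by (simp add: hat_scaleR)
  moreover have "hat H (g n x0) \<noteq> (1 / 2) *\<^sub>R (a + b)" for n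
    using orbit_point_timelike(2)[OF g, of n] null_ab by (auto simp: B.scaleR_left B.scaleR_right)
  ultimately show ?thesis
    unfolding limit_set_iff using g by (intro exI[of _ g]) simp
qed

context
  fixes a b c assumes abc: "a \<in> D" "b \<in> D" "c \<in> D" "a \<noteq> b" "a \<noteq> c" "b \<noteq> c"
begin

lemma hat_in_limit_set_if_in_tangency_orbit:
  assumes "in_tangency_orbit a b c v" shows "hat H v \<in> \<Lambda>"
proof -
  obtain w k t where w: "w \<in> \<Gamma>" "k \<noteq> 0" "t \<in> {a + c, b + c, a + b}" "v = k *\<^sub>R w t"
    using assms unfolding in_tangency_orbit_def by blast
  have "(1 / 2) *\<^sub>R t \<in> \<Lambda>"
    using w(3) abc tangency_point_in_limit_set by auto
  then have "hat H (w ((1 / 2) *\<^sub>R t)) \<in> \<Lambda>"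
    using w(1) by (rule limit_set_invariant)
  moreover have "hat H (w ((1 / 2) *\<^sub>R t)) = hat H v"
    using w by (simp add: linear_scale[OF refl_group_linear] hat_scaleR)
  ultimately show ?thesis
    by simp
qed

lemma hat_circle_point_in_limit_set:
  assumes "circle_point a b c u v \<noteq> 0" shows "hat H (circle_point a b c u v) \<in> \<Lambda>"
proof -
  let ?p = "circle_point a b c"
  define N where "N n = real (Suc n)" for n
  define m where "m n = \<lfloor>N n * u\<rfloor>" for n
  define k where "k n = \<lfloor>N n * v\<rfloor>" for n
  have weight_p: "weight (?p u' v') = u'\<^sup>2 + v'\<^sup>2 + (u' + v')\<^sup>2" for u' v'
    using abc by (simp add: circle_point_def weight.add weight.scaleR weight_basis)
  then have "weight (?p u v) \<noteq> 0"
    using assms by (auto simp: circle_point_def add_nonneg_eq_0_iff)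
  moreover have conv: "(\<lambda>n. ?p (of_int (m n) / N n) (of_int (k n) / N n)) \<longlonglongrightarrow> ?p u v"
    unfolding circle_point_def m_def k_def N_def by (intro tendsto_intros floor_mult_div_tendsto)
  ultimately have lim: "(\<lambda>n. hat H (?p (of_int (m n) / N n) (of_int (k n) / N n)))
      \<longlonglongrightarrow> hat H (?p u v)"
    by (rule tendsto_hat[rotated])
  have "\<forall>\<^sub>F n in sequentially. ?p (of_int (m n) / N n) (of_int (k n) / N n) \<noteq> 0"
    using conv assms by (rule tendsto_imp_eventually_ne)
  then have "\<forall>\<^sub>F n in sequentially. hat H (?p (of_int (m n) / N n) (of_int (k n) / N n)) \<in> \<Lambda>"
  proof (rule eventually_mono)
    fix n assume nonzero: "?p (of_int (m n) / N n) (of_int (k n) / N n) \<noteq> 0"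
    have scaled: "?p (of_int (m n) / N n) (of_int (k n) / N n)
        = (1 / N n)\<^sup>2 *\<^sub>R ?p (of_int (m n)) (of_int (k n))"
      using circle_point_scale[of a b c "1 / N n" "of_int (m n)" "of_int (k n)"] by simp
    with nonzero have "(m n, k n) \<noteq> (0, 0)"
      by (auto simp: circle_point_def)
    then show "hat H (?p (of_int (m n) / N n) (of_int (k n) / N n)) \<in> \<Lambda>"
      unfolding scaled
      using hat_in_limit_set_if_in_tangency_orbit in_tangency_orbit_circle_point[OF abc]
      by (simp add: hat_scaleR N_def)
  qed
  then show ?thesis
    using Lim_in_closed_set[OF closed_limit_set _ _ lim] by simp
qed

lemma null_in_face_in_limit_set:
  assumes "p \<in> H" and "B p p = 0" and "p \<in> convex hull {a, b, c}" shows "p \<in> \<Lambda>"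
proof -
  obtain u v where p: "p = circle_point a b c u v"
    using null_in_convex_hull_circle_point[OF abc assms(3,2)] .
  have "weight p = 1"
    using assms(1) by (simp add: affine_hull_D_eq)
  then have "p \<noteq> 0" and "hat H p = p"
    by (auto simp: hat_eq)
  then show ?thesis
    using hat_circle_point_in_limit_set[of u v] by (simp add: p)
qed

end

lemma limit_sequence_escapes:
  assumes g: "\<And>n. g n \<in> \<Gamma>" "\<And>n. hat H (g n x0) \<noteq> p" "(\<lambda>n. hat H (g n x0)) \<longlonglongrightarrow> p"
  shows "\<forall>\<^sub>F n in sequentially. \<exists>c\<in>D. K < norm (g n c)"
proof -
  let ?F = "{w \<in> \<Gamma>. \<forall>c\<in>D. norm (w c) \<le> K}"
  have "\<forall>\<^sub>F n in sequentially. g n \<noteq> w" if "w \<in> ?F" for w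
  proof (cases "hat H (w x0) = p")
    case True
    then show ?thesis
      using g(2) by (auto intro: always_eventually)
  next
    case False
    then have "\<forall>\<^sub>F n in sequentially. hat H (g n x0) \<noteq> hat H (w x0)"
      using g(3) by (intro tendsto_imp_eventually_ne) auto
    then show ?thesis
      by (rule eventually_mono) auto
  qed
  then have "\<forall>\<^sub>F n in sequentially. \<forall>w\<in>?F. g n \<noteq> w"
    by (rule eventually_ball_finite[OF finite_refl_group_bounded, rule_format])
  then show ?thesis
  proof (rule eventually_mono)
    fix n assume "\<forall>w\<in>?F. g n \<noteq> w"
    then have "g n \<notin> ?F"
      by blast
    then show "\<exists>c\<in>D. K < norm (g n c)"
      using g(1)[of n] by (auto simp: not_le)
  qed
qed

lemma limit_set_subset_closure_gasket: "\<Lambda> \<subseteq> closure gasket"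
proof
  fix p assume "p \<in> \<Lambda>"
  then obtain g where g: "\<And>n. g n \<in> \<Gamma>" "\<And>n. hat H (g n x0) \<noteq> p" "(\<lambda>n. hat H (g n x0)) \<longlonglongrightarrow> p"
    unfolding limit_set_iff by blast
  obtain r a b where r: "strict_mono r" and b: "b \<noteq> 0" "B b b = 0"
    and attract: "\<And>y. B y b \<noteq> 0 \<Longrightarrow> (\<lambda>n. hat H (g (r n) y)) \<longlonglongrightarrow> a"
  proof (rule escaping_sequence_attracts[OF g(1)])
    show "\<forall>\<^sub>F n in sequentially. \<exists>c\<in>D. K < norm (g n c)" for K
      using g by (rule limit_sequence_escapes)
  qed blast
  have "(\<lambda>n. hat H (g (r n) x0)) \<longlonglongrightarrow> p"
    using LIMSEQ_subseq_LIMSEQ[OF g(3) r] by (simp add: o_def)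
  moreover have "(\<lambda>n. hat H (g (r n) x0)) \<longlonglongrightarrow> a"
    using timelike_not_orthogonal_null[OF x0_timelike b(2,1)] by (rule attract)
  ultimately have "a = p"
    by (rule LIMSEQ_unique[rotated])
  obtain q c where q: "q \<in> face_circle c" "c \<in> D" "B q b \<noteq> 0"
    by (rule face_circle_point_not_orthogonal[OF b])
  have "hat H (g (r n) q) \<in> gasket" for n
    by (rule UN_I[OF g(1)], rule imageI, rule UN_I[OF q(2)], rule q(1))
  moreover have "(\<lambda>n. hat H (g (r n) q)) \<longlonglongrightarrow> p"
    using attract[OF q(3)] \<open>a = p\<close> by simp
  ultimately show "p \<in> closure gasket"
    unfolding closure_sequential by (intro exI[of _ "\<lambda>n. hat H (g (r n) q)"]) simp
qed

lemma closure_gasket_subset_limit_set: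
  assumes "card D = 4" shows "closure gasket \<subseteq> \<Lambda>"
proof -
  have "hat H (w y) \<in> \<Lambda>" if w: "w \<in> \<Gamma>" and c: "c \<in> D" and y: "y \<in> face_circle c" for w c y
  proof -
    have "card (D - {c}) = 3"
      using assms c finite_D by simp
    then obtain a b e where abe: "D - {c} = {a, b, e}" "a \<noteq> b" "b \<noteq> e" "a \<noteq> e"
      by (auto simp: card_3_iff)
    then have "y \<in> \<Lambda>"
      using y null_in_face_in_limit_set[of a b e y] by auto
    then show ?thesis
      using w by (rule limit_set_invariant)
  qed
  then have "gasket \<subseteq> \<Lambda>"
    by blast
  then show ?thesis
    using closed_limit_set by (rule closure_minimal)
qed

lemma limit_set_eq_closure_gasket: "card D = 4 \<Longrightarrow> \<Lambda> = closure gasket"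
  using limit_set_subset_closure_gasket closure_gasket_subset_limit_set by blast

end

theorem proposition4p3:
  fixes B :: "'v::euclidean_space \<Rightarrow> 'v \<Rightarrow> real"
    and \<alpha> \<beta> \<gamma> \<delta> :: 'v
    and x0 :: 'v
  assumes dim: "DIM('v) = 4"
    and bil: "bilinear B"
    and sym: "\<And>u v. B u v = B v u"
    and sig: "signature_3_1 B"
    and basis: "independent {\<alpha>, \<beta>, \<gamma>, \<delta>}" "span {\<alpha>, \<beta>, \<gamma>, \<delta>} = UNIV"
    and diag: "\<And>c. c \<in> {\<alpha>, \<beta>, \<gamma>, \<delta>} \<Longrightarrow> B c c = 1"
    and offdiag: "\<And>c d. c \<in> {\<alpha>, \<beta>, \<gamma>, \<delta>} \<Longrightarrow> d \<in> {\<alpha>, \<beta>, \<gamma>, \<delta>} \<Longrightarrow> c \<noteq> d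
                  \<Longrightarrow> B c d = -1"
    and x0: "x0 \<in> {v. B v v < 0} \<inter> affine hull {\<alpha>, \<beta>, \<gamma>, \<delta>}"
  shows
    "let \<Delta> = {\<alpha>, \<beta>, \<gamma>, \<delta>};
         \<H> = affine hull \<Delta>;
         \<Gamma> = refl_group B \<Delta>;
         act = (\<lambda>w x. hat \<H> (w x));
         Q = {v. B v v = 0} \<inter> \<H>;
         h = (\<lambda>c. Q \<inter> convex hull (\<Delta> - {c}));
         \<A> = (\<Union>w\<in>\<Gamma>. act w ` (\<Union>c\<in>\<Delta>. h c))
     in limit_set \<Gamma> act x0 = closure \<A>"
proof -
  have card: "card {\<alpha>, \<beta>, \<gamma>, \<delta>} = 4"
    using basis_card_eq_dim[of "{\<alpha>, \<beta>, \<gamma>, \<delta>}" UNIV] basis dim by simp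
  interpret universal_coxeter_orbit B "{\<alpha>, \<beta>, \<gamma>, \<delta>}" x0
    using bil sym basis(2) diag offdiag x0 card by unfold_locales auto
  show ?thesis
    using limit_set_eq_closure_gasket[OF card] unfolding Let_def .
qed

end
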